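(* Let $T$ be a bounded operator on $C([0,\omega_1])$ such that $T\neq\widetilde{P}_\sigma T\widetilde{P}_\sigma$ for every countable ordinal $\sigma$. Then there is $\epsilon>0$ such that for each countable ordinal $\xi$ there exists $f\in C([0,\omega_1])$ with $\operatorname{supp}(f)\subseteq(\xi,\omega_1)$, $\|f\|\le1$ and $\|Tf\|\ge\epsilon$.
   Context: $\omega_1$ is the first uncountable ordinal; $[0,\omega_1]$ has the order topology and $C([0,\omega_1])$ is the Banach space of continuous scalar-valued functions with sup norm. $\operatorname{supp}(f)=\{k: f(k)\neq0\}$. For a countable ordinal $\sigma$, $\widetilde{P}_\sigma f=f\cdot\mathbf{1}_{[0,\sigma]}+f(\omega_1)\mathbf{1}_{[\sigma+1,\omega_1]}$. *)

theory Defs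
  imports "HOL-Analysis.Analysis"
begin

text \<open>Model of the ordinal interval [0,omega_1]: a well-ordered type (with its order
topology) having a greatest element omega_1, which is uncountable, and in which every
element other than the greatest one has only countably many predecessors. Any such type
is order-isomorphic to [0,omega_1]; the elements below the greatest one are exactly
the countable ordinals.\<close>

definition omega1_interval :: "'a::{wellorder,linorder_topology} itself \<Rightarrow> bool" where
  "omega1_interval _ \<longleftrightarrow>
     (\<exists>t::'a. \<forall>x. x \<le> t) \<and>
     uncountable (UNIV :: 'a set) \<and>
     (\<forall>x::'a. (\<exists>y. x < y) \<longrightarrow> countable {..x})"

definition om1 :: "'a::wellorder" where
  "om1 = (GREATEST x. True)"

definition Cspace :: "('a::topological_space \<Rightarrow> 'k::real_normed_field) set" where
  "Cspace = {f. continuous_on UNIV f}"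

definition supnorm :: "('a \<Rightarrow> 'k::real_normed_field) \<Rightarrow> real" where
  "supnorm f = (SUP x. norm (f x))"

definition supp :: "('a \<Rightarrow> 'k::zero) \<Rightarrow> 'a set" where
  "supp f = {k. f k \<noteq> 0}"

definition bounded_op :: "(('a::topological_space \<Rightarrow> 'k::real_normed_field) \<Rightarrow> ('a \<Rightarrow> 'k)) \<Rightarrow> bool" where
  "bounded_op T \<longleftrightarrow>
     (\<forall>f\<in>Cspace. T f \<in> Cspace) \<and>
     (\<forall>f\<in>Cspace. \<forall>g\<in>Cspace. T (\<lambda>x. f x + g x) = (\<lambda>x. T f x + T g x)) \<and>
     (\<forall>c. \<forall>f\<in>Cspace. T (\<lambda>x. c * f x) = (\<lambda>x. c * T f x)) \<and>
     (\<exists>K. \<forall>f\<in>Cspace. supnorm (T f) \<le> K * supnorm f)"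

definition Ptil :: "'a::wellorder \<Rightarrow> ('a \<Rightarrow> 'k::zero) \<Rightarrow> ('a \<Rightarrow> 'k)" where
  "Ptil \<sigma> f = (\<lambda>k. if k \<le> \<sigma> then f k else f om1)"

end

theory Submission
  imports Defs
begin

text \<open>Suppose the conclusion fails. Then there is a single countable \<xi> beyond which T
annihilates every function supported in (\<xi>,om1), so T f only depends on Ptil \<xi> f.
Functions constant on (\<xi>,om1] are uniform limits of combinations of the countably many
indicators of [0,b] with b \<le> \<xi> or b = om1. The image under T of each indicator is
continuous, hence constant beyond some countable ordinal, and by boundedness of T a common
countable bound \<tau> of these ordinals works for all such functions. For
\<sigma> = max \<xi> \<tau> this gives T = Ptil \<sigma> T Ptil \<sigma>.\<close>

lemma le_zero_if_less_inverse_Suc: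
  fixes a :: real
  assumes "\<And>n::nat. a < inverse (real (Suc n))"
  shows "a \<le> 0"
  using assms reals_Archimedean[of a] by (meson less_asym not_le)

lemma open_atMost_wellorder: "open {..b::'a::{wellorder,linorder_topology}}"
proof (cases "\<exists>c. b < c")
  case True
  define c where "c = (LEAST c. b < c)"
  have "{..b} = {..<c}"
    using LeastI_ex[OF True] not_less_Least by (fastforce simp: c_def not_less)
  then show ?thesis by simp
next
  case False
  then have "{..b} = UNIV" by (auto simp: not_less)
  then show ?thesis by simp
qed

lemma continuous_on_if_le:
  fixes \<beta> :: "'a::{wellorder,linorder_topology}"
  assumes "continuous_on UNIV f" and "continuous_on UNIV g"
  shows "continuous_on UNIV (\<lambda>x. if x \<le> \<beta> then f x else g x)"
proof -
  have split: "UNIV = {..\<beta>} \<union> {\<beta><..}" by auto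
  have "continuous_on ({..\<beta>} \<union> {\<beta><..}) (\<lambda>x. if x \<le> \<beta> then f x else g x)"
    using open_atMost_wellorder assms
    by (intro continuous_on_cases_local_open) (auto simp flip: split intro: continuous_on_subset)
  then show ?thesis by (simp flip: split)
qed

lemma om1_greatest:
  assumes "omega1_interval TYPE('a::{wellorder,linorder_topology})"
  shows "(x::'a) \<le> om1"
proof -
  from assms obtain t :: 'a where t: "\<forall>x. x \<le> t" unfolding omega1_interval_def by blast
  then have "om1 = t" unfolding om1_def by (intro Greatest_equality) auto
  with t show ?thesis by simp
qed

lemma countable_below_om1_bounded:
  assumes "omega1_interval TYPE('a::{wellorder,linorder_topology})"
    and "countable A" and "\<forall>a\<in>A. (a::'a) < om1"
  shows "\<exists>b<om1. \<forall>a\<in>A. a < b"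
proof -
  have "countable ((\<Union>a\<in>A. {..a}) \<union> {om1::'a})"
    using assms unfolding omega1_interval_def by (auto intro!: countable_UN)
  moreover have "uncountable (UNIV :: 'a set)"
    using assms(1) unfolding omega1_interval_def by simp
  ultimately obtain b where b: "b \<notin> (\<Union>a\<in>A. {..a}) \<union> {om1}"
    by (metis UNIV_eq_I countable_subset subset_UNIV)
  then have "b < om1" using om1_greatest[OF assms(1), of b] by auto
  with b show ?thesis by (auto simp: not_le)
qed

inductive_set step_fun :: "'a::wellorder set \<Rightarrow> ('a \<Rightarrow> 'k::real_normed_field) set"
  for A where
  zero: "(\<lambda>x. 0) \<in> step_fun A"
| step: "h \<in> step_fun A \<Longrightarrow> b \<in> A \<Longrightarrow> (\<lambda>x. h x + c * (if x \<le> b then 1 else 0)) \<in> step_fun A"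

lemma step_fun_mono: "h \<in> step_fun A \<Longrightarrow> A \<subseteq> B \<Longrightarrow> h \<in> step_fun B"
  by (induction rule: step_fun.induct) (auto intro: step_fun.intros)

lemma step_fun_vanishes_above: "h \<in> step_fun A \<Longrightarrow> \<forall>a\<in>A. a < y \<Longrightarrow> h y = 0"
  by (induction rule: step_fun.induct) auto

lemma step_fun_bounded: "h \<in> step_fun A \<Longrightarrow> \<exists>M. \<forall>x. norm (h x) \<le> M"
proof (induction rule: step_fun.induct)
  case zero
  then show ?case by auto
next
  case (step h b c)
  then obtain M where M: "\<forall>x. norm (h x) \<le> M" by blast
  have "norm (h x + c * (if x \<le> b then 1 else 0)) \<le> norm (h x) + norm c" for x
    by (rule order.trans[OF norm_triangle_ineq]) (simp add: norm_mult)
  then have "\<forall>x. norm (h x + c * (if x \<le> b then 1 else 0)) \<le> M + norm c"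
    using M by (meson add_right_mono order.trans)
  then show ?case by blast
qed

lemma step_fun_continuous:
  fixes h :: "'a::{wellorder,linorder_topology} \<Rightarrow> 'k::real_normed_field"
  shows "h \<in> step_fun A \<Longrightarrow> continuous_on UNIV h"
  by (induction rule: step_fun.induct)
     (auto intro!: continuous_on_add continuous_on_mult_left continuous_on_if_le)

text \<open>Going down from \<beta>, continuity from the left at \<beta> gives b < \<beta> with g within \<epsilon>
of g \<beta> on (b,\<beta>]; the approximation on [0,b] comes from well-founded induction.\<close>

lemma step_fun_approx:
  fixes g :: "'a::{wellorder,linorder_topology} \<Rightarrow> 'k::real_normed_field"
  assumes g: "continuous_on UNIV g" and "\<epsilon> > 0"
  shows "\<exists>h\<in>step_fun {..\<beta>}. \<forall>y\<le>\<beta>. norm (g y - h y) \<le> \<epsilon>"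
proof (induction \<beta> rule: less_induct)
  case (less \<beta>)
  show ?case
  proof (cases "\<exists>\<alpha>. \<alpha> < \<beta>")
    case False
    let ?h = "\<lambda>x. (\<lambda>x. 0) x + g \<beta> * (if x \<le> \<beta> then 1 else 0)"
    have "?h \<in> step_fun {..\<beta>}" by (intro step_fun.intros) simp_all
    moreover have "y = \<beta>" if "y \<le> \<beta>" for y using False that by (auto simp: le_less)
    ultimately show ?thesis using \<open>\<epsilon> > 0\<close> by force
  next
    case True
    then obtain \<alpha> where "\<alpha> < \<beta>" by blast
    moreover have "open (g -` ball (g \<beta>) \<epsilon>)"
      using g continuous_on_open_vimage[of UNIV g] by auto
    ultimately obtain b where b: "b < \<beta>" "{b<..\<beta>} \<subseteq> g -` ball (g \<beta>) \<epsilon>"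
      using open_left \<open>\<epsilon> > 0\<close> by (metis centre_in_ball vimageI2)
    from less[OF b(1)] obtain hb where hb: "hb \<in> step_fun {..b}" "\<forall>y\<le>b. norm (g y - hb y) \<le> \<epsilon>"
      by blast
    define h where "h = (\<lambda>x. (\<lambda>x. hb x + g \<beta> * (if x \<le> \<beta> then 1 else 0)) x
                              + (- g \<beta>) * (if x \<le> b then 1 else 0))"
    have "hb \<in> step_fun {..\<beta>}" using hb(1) by (rule step_fun_mono) (use b(1) in auto)
    then have "h \<in> step_fun {..\<beta>}" unfolding h_def using b(1) by (intro step_fun.intros) auto
    moreover have "norm (g y - h y) \<le> \<epsilon>" if y: "y \<le> \<beta>" for y
    proof (cases "y \<le> b")
      case True
      then show ?thesis using y hb(2) by (simp add: h_def)
    next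
      case False
      then have "hb y = 0" by (intro step_fun_vanishes_above[OF hb(1)]) auto
      moreover have "y \<in> {b<..\<beta>}" using False y by simp
      then have "dist (g \<beta>) (g y) < \<epsilon>" using b(2) by auto
      ultimately show ?thesis using False y by (simp add: h_def dist_norm norm_minus_commute)
    qed
    ultimately show ?thesis by blast
  qed
qed

lemma step_fun_approx_eventually_constant:
  fixes g :: "'a::{wellorder,linorder_topology} \<Rightarrow> 'k::real_normed_field" and t :: 'a
  assumes g: "continuous_on UNIV g" and const: "\<forall>y>\<xi>. g y = g t"
    and top: "\<forall>x. x \<le> t" and "\<epsilon> > 0"
  shows "\<exists>h\<in>step_fun (insert t {..\<xi>}). \<forall>y. norm (g y - h y) \<le> \<epsilon>"
proof -
  obtain h where h: "h \<in> step_fun {..\<xi>}" "\<forall>y\<le>\<xi>. norm (g y - h y) \<le> \<epsilon>"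
    using step_fun_approx[OF g \<open>\<epsilon> > 0\<close>] by blast
  define h' where "h' = (\<lambda>x. (\<lambda>x. h x + g t * (if x \<le> t then 1 else 0)) x
                            + (- g t) * (if x \<le> \<xi> then 1 else 0))"
  have "h \<in> step_fun (insert t {..\<xi>})" using h(1) by (rule step_fun_mono) auto
  then have "h' \<in> step_fun (insert t {..\<xi>})" unfolding h'_def by (intro step_fun.intros) auto
  moreover have "norm (g y - h' y) \<le> \<epsilon>" for y
  proof (cases "y \<le> \<xi>")
    case True
    then show ?thesis using h(2) top by (simp add: h'_def)
  next
    case False
    then have "h y = 0" by (intro step_fun_vanishes_above[OF h(1)]) auto
    then show ?thesis using False const top \<open>\<epsilon> > 0\<close> by (simp add: h'_def)
  qed
  ultimately show ?thesis by blast
qed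

lemma continuous_bounded_wellorder_top:
  fixes f :: "'a::{wellorder,linorder_topology} \<Rightarrow> 'k::real_normed_field" and t :: 'a
  assumes f: "continuous_on UNIV f" and top: "\<forall>x. x \<le> t"
  shows "bdd_above (range (\<lambda>x. norm (f x)))"
proof -
  obtain h where h: "h \<in> step_fun {..t}" "\<forall>y\<le>t. norm (f y - h y) \<le> 1"
    using step_fun_approx[OF f, of 1 t] by auto
  obtain M where M: "\<forall>x. norm (h x) \<le> M" using step_fun_bounded[OF h(1)] by blast
  have "norm (f y) \<le> M + 1" for y
  proof -
    have "norm (f y) \<le> norm (f y - h y) + norm (h y)"
      using norm_triangle_ineq[of "f y - h y" "h y"] by simp
    moreover have "norm (f y - h y) \<le> 1" using h(2) top by blast
    moreover have "norm (h y) \<le> M" using M by blast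
    ultimately show ?thesis by linarith
  qed
  then show ?thesis by (rule bdd_aboveI2)
qed

lemma norm_le_supnorm:
  fixes f :: "'a::{wellorder,linorder_topology} \<Rightarrow> 'k::real_normed_field"
  assumes "omega1_interval TYPE('a)" and "f \<in> Cspace"
  shows "norm (f x) \<le> supnorm f"
proof -
  have "continuous_on UNIV f" using assms(2) by (simp add: Cspace_def)
  then have "bdd_above (range (\<lambda>x. norm (f x)))"
    by (rule continuous_bounded_wellorder_top[where t = om1]) (simp add: om1_greatest[OF assms(1)])
  then show ?thesis unfolding supnorm_def by (rule cSUP_upper[OF UNIV_I])
qed

lemma supnorm_least: "(\<And>x. norm (f x) \<le> c) \<Longrightarrow> supnorm f \<le> c"
  unfolding supnorm_def by (intro cSUP_least) auto

text \<open>The countably many ordinals b n, beyond which f is within 1/(n+1) of f om1,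
have a common countable bound.\<close>

lemma continuous_eventually_constant_om1:
  fixes f :: "'a::{wellorder,linorder_topology} \<Rightarrow> 'k::real_normed_field"
  assumes om: "omega1_interval TYPE('a)" and f: "continuous_on UNIV f"
  shows "\<exists>\<tau><om1. \<forall>x>\<tau>. f x = f om1"
proof -
  have "UNIV \<noteq> {om1::'a}"
  proof
    assume UNIV_eq: "UNIV = {om1::'a}"
    have "countable {om1::'a}" by simp
    then have "countable (UNIV :: 'a set)" by (simp only: UNIV_eq)
    with om show False unfolding omega1_interval_def by blast
  qed
  then obtain y :: 'a where "y < om1" using om1_greatest[OF om] le_neq_trans by blast
  have "\<forall>n. \<exists>b<om1. {b<..om1} \<subseteq> f -` ball (f om1) (inverse (real (Suc n)))"
  proof
    fix n
    show "\<exists>b<om1. {b<..om1} \<subseteq> f -` ball (f om1) (inverse (real (Suc n)))"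
    proof (rule open_left[OF _ _ \<open>y < om1\<close>])
      show "open (f -` ball (f om1) (inverse (real (Suc n))))"
        using f continuous_on_open_vimage[of UNIV f] by simp
    qed simp
  qed
  then have "\<exists>b. \<forall>n. b n < om1 \<and> {b n<..om1} \<subseteq> f -` ball (f om1) (inverse (real (Suc n)))"
    by (rule choice)
  then obtain b where b: "\<And>n. b n < om1"
    "\<And>n. {b n<..om1} \<subseteq> f -` ball (f om1) (inverse (real (Suc n)))"
    by blast
  have "countable (range b)" "\<forall>a\<in>range b. a < om1" using b(1) by auto
  then obtain \<tau> where \<tau>: "\<tau> < om1" "\<forall>a\<in>range b. a < \<tau>"
    using countable_below_om1_bounded[OF om] by blast
  have "f x = f om1" if "\<tau> < x" for x
  proof -
    have "x \<in> {b n<..om1}" for n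
      using less_trans[OF bspec[OF \<tau>(2) rangeI] that] om1_greatest[OF om, of x] by simp
    then have "dist (f om1) (f x) < inverse (real (Suc n))" for n using subsetD[OF b(2)] by simp
    then have "dist (f om1) (f x) \<le> 0" by (rule le_zero_if_less_inverse_Suc)
    then show ?thesis by simp
  qed
  with \<tau>(1) show ?thesis by blast
qed

lemma Ptil_Cspace:
  fixes f :: "'a::{wellorder,linorder_topology} \<Rightarrow> 'k::real_normed_field"
  shows "f \<in> Cspace \<Longrightarrow> Ptil \<sigma> f \<in> Cspace"
  unfolding Ptil_def Cspace_def by (auto intro: continuous_on_if_le)

locale omega1_operator =
  fixes T :: "('a::{wellorder,linorder_topology} \<Rightarrow> 'k::real_normed_field) \<Rightarrow> ('a \<Rightarrow> 'k)"
  assumes omega1: "omega1_interval TYPE('a)"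
    and bounded: "bounded_op T"
begin

lemma T_Cspace: "f \<in> Cspace \<Longrightarrow> T f \<in> Cspace"
  and T_add: "f \<in> Cspace \<Longrightarrow> g \<in> Cspace \<Longrightarrow> T (\<lambda>x. f x + g x) = (\<lambda>x. T f x + T g x)"
  and T_scale: "f \<in> Cspace \<Longrightarrow> T (\<lambda>x. c * f x) = (\<lambda>x. c * T f x)"
  using bounded unfolding bounded_op_def by blast+

lemma T_zero: "T (\<lambda>x. 0) = (\<lambda>x. 0)"
  using T_scale[of "\<lambda>x. 0" 0] by (simp add: Cspace_def)

lemma T_diff:
  assumes "f \<in> Cspace" "g \<in> Cspace"
  shows "T (\<lambda>x. f x - g x) = (\<lambda>x. T f x - T g x)"
proof -
  have "(\<lambda>x. f x - g x) \<in> Cspace" using assms by (simp add: Cspace_def continuous_on_diff)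
  then have "T (\<lambda>x. g x + (f x - g x)) = (\<lambda>x. T g x + T (\<lambda>x. f x - g x) x)"
    by (rule T_add[OF assms(2)])
  then show ?thesis by (simp add: fun_eq_iff algebra_simps)
qed

lemma T_bound:
  obtains K where "K \<ge> 0" "\<And>f x. f \<in> Cspace \<Longrightarrow> norm (T f x) \<le> K * supnorm f"
proof -
  obtain K where K: "\<And>f. f \<in> Cspace \<Longrightarrow> supnorm (T f) \<le> K * supnorm f"
    using bounded unfolding bounded_op_def by blast
  have "norm (T f x) \<le> \<bar>K\<bar> * supnorm f" if f: "f \<in> Cspace" for f x
  proof -
    have "0 \<le> supnorm f" using norm_le_supnorm[OF omega1 f] norm_ge_zero order.trans by blast
    then have "K * supnorm f \<le> \<bar>K\<bar> * supnorm f" by (simp add: mult_right_mono)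
    then show ?thesis using norm_le_supnorm[OF omega1 T_Cspace[OF f], of x] K[OF f] by linarith
  qed
  then show thesis using that abs_ge_zero by blast
qed

lemma T_null_if_null_on_unit_ball:
  assumes unit_null: "\<And>f. f \<in> Cspace \<Longrightarrow> supp f \<subseteq> S \<Longrightarrow> supnorm f \<le> 1 \<Longrightarrow> T f = (\<lambda>x. 0)"
    and f: "f \<in> Cspace" "supp f \<subseteq> S"
  shows "T f = (\<lambda>x. 0)"
proof -
  define c where "c = supnorm f + 1"
  have "0 \<le> supnorm f" using norm_le_supnorm[OF omega1 f(1)] norm_ge_zero order.trans by blast
  then have c: "c > 0" by (simp add: c_def)
  define f' where "f' = (\<lambda>x. inverse (of_real c) * f x)"
  have f'C: "f' \<in> Cspace" using f(1) by (simp add: f'_def Cspace_def continuous_on_mult_left)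
  have "supp f' \<subseteq> S" using f(2) by (auto simp: f'_def supp_def)
  moreover have "supnorm f' \<le> 1"
  proof (rule supnorm_least)
    fix x
    have "norm (f' x) = norm (f x) / c"
      using c by (simp add: f'_def norm_mult norm_inverse divide_inverse_commute)
    also have "\<dots> \<le> 1" using norm_le_supnorm[OF omega1 f(1), of x] c by (simp add: c_def)
    finally show "norm (f' x) \<le> 1" .
  qed
  ultimately have "T f' = (\<lambda>x. 0)" using unit_null[OF f'C] by blast
  moreover have "f = (\<lambda>x. of_real c * f' x)"
    using c by (simp add: f'_def mult.assoc[symmetric] right_inverse)
  ultimately show ?thesis using T_scale[OF f'C, of "of_real c"] by simp
qed

lemma T_tail_null:
  assumes small: "\<forall>\<epsilon>>0. \<exists>\<xi><om1. \<forall>f\<in>Cspace. supp f \<subseteq> {\<xi><..<om1} \<longrightarrow> supnorm f \<le> 1 \<longrightarrow>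
                    supnorm (T f) < \<epsilon>"
  shows "\<exists>\<xi><om1. \<forall>f\<in>Cspace. supp f \<subseteq> {\<xi><..<om1} \<longrightarrow> T f = (\<lambda>x. 0)"
proof -
  have "\<forall>n. \<exists>\<xi><om1. \<forall>f\<in>Cspace. supp f \<subseteq> {\<xi><..<om1} \<longrightarrow> supnorm f \<le> 1 \<longrightarrow>
          supnorm (T f) < inverse (real (Suc n))"
    using small by simp
  then have "\<exists>xi. \<forall>n. xi n < om1 \<and> (\<forall>f\<in>Cspace. supp f \<subseteq> {xi n<..<om1} \<longrightarrow> supnorm f \<le> 1 \<longrightarrow>
               supnorm (T f) < inverse (real (Suc n)))"
    by (rule choice)
  then obtain xi where xi: "\<And>n. xi n < om1"
    and xi_small: "\<And>n f. f \<in> Cspace \<Longrightarrow> supp f \<subseteq> {xi n<..<om1} \<Longrightarrow> supnorm f \<le> 1 \<Longrightarrow>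
                      supnorm (T f) < inverse (real (Suc n))"
    by blast
  have "countable (range xi)" "\<forall>a\<in>range xi. a < om1" using xi by auto
  then obtain \<xi> where \<xi>: "\<xi> < om1" "\<forall>a\<in>range xi. a < \<xi>"
    using countable_below_om1_bounded[OF omega1] by blast
  have "T f = (\<lambda>x. 0)" if f: "f \<in> Cspace" "supp f \<subseteq> {\<xi><..<om1}" "supnorm f \<le> 1" for f
  proof
    fix x
    have "supp f \<subseteq> {xi n<..<om1}" for n
      using f(2) less_trans[OF bspec[OF \<xi>(2) rangeI]] by auto
    then have "norm (T f x) < inverse (real (Suc n))" for n
      using norm_le_supnorm[OF omega1 T_Cspace[OF f(1)], of x] xi_small[OF f(1) _ f(3)]
      by (meson le_less_trans)
    then have "norm (T f x) \<le> 0" by (rule le_zero_if_less_inverse_Suc)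
    then show "T f x = 0" by simp
  qed
  with \<xi>(1) show ?thesis using T_null_if_null_on_unit_ball by blast
qed

lemma T_Ptil_eq:
  assumes null: "\<forall>f\<in>Cspace. supp f \<subseteq> {\<xi><..<om1} \<longrightarrow> T f = (\<lambda>x. 0)" and f: "f \<in> Cspace"
  shows "T (Ptil \<xi> f) = T f"
proof -
  have PC: "Ptil \<xi> f \<in> Cspace" using f by (rule Ptil_Cspace)
  have "supp (\<lambda>x. f x - Ptil \<xi> f x) \<subseteq> {\<xi><..<om1}"
  proof
    fix k assume "k \<in> supp (\<lambda>x. f x - Ptil \<xi> f x)"
    then have "\<not> k \<le> \<xi>" "k \<noteq> om1" by (auto simp: supp_def Ptil_def)
    then show "k \<in> {\<xi><..<om1}" using om1_greatest[OF omega1, of k] le_neq_trans by (auto simp: not_le)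
  qed
  moreover have "(\<lambda>x. f x - Ptil \<xi> f x) \<in> Cspace"
    using f PC by (simp add: Cspace_def continuous_on_diff)
  ultimately have "T (\<lambda>x. f x - Ptil \<xi> f x) = (\<lambda>x. 0)" using null by blast
  then show ?thesis using T_diff[OF f PC] by (simp add: fun_eq_iff)
qed

lemma T_step_fun_eventually_constant:
  assumes "countable A"
  shows "\<exists>\<tau><om1. \<forall>h\<in>step_fun A. \<forall>x>\<tau>. T h x = T h om1"
proof -
  define ind where "ind b = (\<lambda>x::'a. if x \<le> b then (1::'k) else 0)" for b
  have ind_C: "ind b \<in> Cspace" for b
    by (simp add: ind_def Cspace_def continuous_on_if_le)
  have "\<forall>b\<in>A. \<exists>t<om1. \<forall>x>t. T (ind b) x = T (ind b) om1"
    using continuous_eventually_constant_om1[OF omega1] T_Cspace[OF ind_C]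
    unfolding Cspace_def by blast
  then obtain t where t: "\<And>b. b \<in> A \<Longrightarrow> t b < om1"
    "\<And>b x. b \<in> A \<Longrightarrow> t b < x \<Longrightarrow> T (ind b) x = T (ind b) om1"
    by metis
  have "countable (t ` A)" "\<forall>a\<in>t ` A. a < om1" using assms t(1) by auto
  then obtain \<tau> where \<tau>: "\<tau> < om1" "\<forall>a\<in>t ` A. a < \<tau>"
    using countable_below_om1_bounded[OF omega1] by blast
  have "\<forall>x>\<tau>. T h x = T h om1" if "h \<in> step_fun A" for h
    using that
  proof (induction rule: step_fun.induct)
    case zero
    then show ?case by (simp add: T_zero)
  next
    case (step h b c)
    have hC: "h \<in> Cspace" using step_fun_continuous[OF step(1)] by (simp add: Cspace_def)
    have "(\<lambda>x. c * ind b x) \<in> Cspace" using ind_C by (simp add: Cspace_def continuous_on_mult_left)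
    then have "T (\<lambda>x. h x + c * ind b x) = (\<lambda>x. T h x + c * T (ind b) x)"
      using T_add[OF hC] T_scale[OF ind_C] by simp
    moreover have "T (ind b) x = T (ind b) om1" if "\<tau> < x" for x
      using t(2)[OF step(2)] \<tau>(2) step(2) that by (meson imageI less_trans)
    ultimately show ?case using step(3) by (simp add: ind_def)
  qed
  with \<tau>(1) show ?thesis by blast
qed

lemma T_value_eq_if_approx:
  assumes g: "g \<in> Cspace"
    and approx: "\<And>e. e > 0 \<Longrightarrow> \<exists>h\<in>Cspace. (\<forall>y. norm (g y - h y) \<le> e) \<and> T h x = T h z"
  shows "T g x = T g z"
proof -
  obtain K where K: "K \<ge> 0" "\<And>f x. f \<in> Cspace \<Longrightarrow> norm (T f x) \<le> K * supnorm f"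
    using T_bound by blast
  have "norm (T g x - T g z) \<le> 0 + e" if "e > 0" for e
  proof -
    define e' where "e' = e / (2 * K + 1)"
    have "e' > 0" using \<open>e > 0\<close> K(1) by (simp add: e'_def)
    then obtain h where h: "h \<in> Cspace" "\<forall>y. norm (g y - h y) \<le> e'" "T h x = T h z"
      using approx by blast
    have dC: "(\<lambda>y. g y - h y) \<in> Cspace" using g h(1) by (simp add: Cspace_def continuous_on_diff)
    have "supnorm (\<lambda>y. g y - h y) \<le> e'" using h(2) by (intro supnorm_least) blast
    then have bound: "norm (T (\<lambda>y. g y - h y) w) \<le> K * e'" for w
      using K(2)[OF dC, of w] mult_left_mono[OF _ K(1)] by (meson order.trans)
    have "T g x - T g z = T (\<lambda>y. g y - h y) x - T (\<lambda>y. g y - h y) z"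
      using T_diff[OF g h(1)] h(3) by simp
    then have "norm (T g x - T g z) \<le> K * e' + K * e'"
      using norm_triangle_ineq4 bound by (smt (verit))
    also have "\<dots> = 2 * K / (2 * K + 1) * e"
      using K(1) by (simp add: e'_def divide_simps)
    also have "\<dots> \<le> e" using \<open>e > 0\<close> K(1) by (intro mult_left_le_one_le) auto
    finally show ?thesis by simp
  qed
  then have "norm (T g x - T g z) \<le> 0" by (rule field_le_epsilon)
  then show ?thesis by simp
qed

text \<open>A function constant beyond \<xi> is a uniform limit of step functions jumping only at
the countably many points of [0,\<xi>] and at om1.\<close>

lemma T_eventually_constant_uniform:
  assumes "\<xi> < om1"
  shows "\<exists>\<tau><om1. \<forall>g\<in>Cspace. (\<forall>y>\<xi>. g y = g om1) \<longrightarrow> (\<forall>x>\<tau>. T g x = T g om1)"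
proof -
  have "countable {..\<xi>}" using omega1 assms unfolding omega1_interval_def by blast
  then have "countable (insert om1 {..\<xi>})" by simp
  then obtain \<tau> where \<tau>: "\<tau> < om1"
    and step_const: "\<forall>h\<in>step_fun (insert om1 {..\<xi>}). \<forall>x>\<tau>. T h x = T h om1"
    using T_step_fun_eventually_constant by blast
  have "T g x = T g om1" if g: "g \<in> Cspace" "\<forall>y>\<xi>. g y = g om1" and x: "\<tau> < x" for g x
  proof (rule T_value_eq_if_approx[OF g(1)])
    fix e :: real assume "e > 0"
    moreover have "continuous_on UNIV g" using g(1) by (simp add: Cspace_def)
    ultimately obtain h where h: "h \<in> step_fun (insert om1 {..\<xi>})" "\<forall>y. norm (g y - h y) \<le> e"
      using step_fun_approx_eventually_constant[of g \<xi> om1 e] g(2) om1_greatest[OF omega1]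
      by blast
    moreover have "h \<in> Cspace" using step_fun_continuous[OF h(1)] by (simp add: Cspace_def)
    ultimately show "\<exists>h\<in>Cspace. (\<forall>y. norm (g y - h y) \<le> e) \<and> T h x = T h om1"
      using step_const x by blast
  qed
  with \<tau> show ?thesis by blast
qed

lemma T_eq_Ptil_T_Ptil:
  assumes null: "\<forall>f\<in>Cspace. supp f \<subseteq> {\<xi><..<om1} \<longrightarrow> T f = (\<lambda>x. 0)"
    and const: "\<forall>g\<in>Cspace. (\<forall>y>\<xi>. g y = g om1) \<longrightarrow> (\<forall>x>\<tau>. T g x = T g om1)"
    and "\<xi> \<le> \<sigma>" "\<tau> \<le> \<sigma>" "\<sigma> < om1" and f: "f \<in> Cspace"
  shows "T f = Ptil \<sigma> (T (Ptil \<sigma> f))"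
proof -
  have "Ptil \<xi> (Ptil \<sigma> f) = Ptil \<xi> f"
    using assms(3,5) by (auto simp: Ptil_def fun_eq_iff)
  then have T_Ptil_\<sigma>: "T (Ptil \<sigma> f) = T (Ptil \<xi> f)"
    using T_Ptil_eq[OF null] Ptil_Cspace[OF f] by metis
  have "\<forall>y>\<xi>. Ptil \<xi> f y = Ptil \<xi> f om1" using assms(3,5) by (auto simp: Ptil_def)
  then have "\<forall>x>\<tau>. T (Ptil \<xi> f) x = T (Ptil \<xi> f) om1" using const Ptil_Cspace[OF f] by blast
  then have "Ptil \<sigma> (T (Ptil \<xi> f)) = T (Ptil \<xi> f)"
    using assms(4) by (auto simp: Ptil_def fun_eq_iff not_le)
  then show ?thesis using T_Ptil_\<sigma> T_Ptil_eq[OF null f] by simp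
qed

end

theorem lemma4p3:
  fixes T :: "('a::{wellorder,linorder_topology} \<Rightarrow> 'k::real_normed_field) \<Rightarrow> ('a \<Rightarrow> 'k)"
  assumes "omega1_interval TYPE('a)"
    and "bounded_op T"
    and "\<forall>\<sigma>::'a. \<sigma> < om1 \<longrightarrow> (\<exists>f\<in>Cspace. T f \<noteq> Ptil \<sigma> (T (Ptil \<sigma> f)))"
  shows "\<exists>\<epsilon>>0. \<forall>\<xi>::'a. \<xi> < om1 \<longrightarrow>
           (\<exists>f\<in>Cspace. supp f \<subseteq> {\<xi><..<om1} \<and> supnorm f \<le> 1 \<and> supnorm (T f) \<ge> \<epsilon>)"
proof (rule ccontr)
  interpret omega1_operator T using assms(1,2) by unfold_locales
  assume "\<not> ?thesis"
  then have "\<forall>\<epsilon>>0. \<exists>\<xi><om1. \<forall>f\<in>Cspace. supp f \<subseteq> {\<xi><..<om1} \<longrightarrow> supnorm f \<le> 1 \<longrightarrow>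
               supnorm (T f) < \<epsilon>"
    by (meson not_le)
  then obtain \<xi> where \<xi>: "\<xi> < om1"
    and null: "\<forall>f\<in>Cspace. supp f \<subseteq> {\<xi><..<om1} \<longrightarrow> T f = (\<lambda>x. 0)"
    using T_tail_null by blast
  obtain \<tau> where \<tau>: "\<tau> < om1"
    and const: "\<forall>g\<in>Cspace. (\<forall>y>\<xi>. g y = g om1) \<longrightarrow> (\<forall>x>\<tau>. T g x = T g om1)"
    using T_eventually_constant_uniform[OF \<xi>] by blast
  have "max \<xi> \<tau> < om1" using \<xi> \<tau> by simp
  then have "\<forall>f\<in>Cspace. T f = Ptil (max \<xi> \<tau>) (T (Ptil (max \<xi> \<tau>) f))"
    using T_eq_Ptil_T_Ptil[OF null const] by simp
  with assms(3) \<open>max \<xi> \<tau> < om1\<close> show False by blast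
qed

end
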